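(* Let $\{v_1,\dots,v_n\}$ be a basis of $\mathbb{C}^n$ and $m_1,\dots,m_n\in\mathbb{R}_+$, and let $\Psi(z)=\max_{1\le j\le n} m_j\log|z\cdot\bar v_j|$ for $z\in\mathbb{D}^n$. Then there exists an orthonormal basis $\{\tilde v_1,\dots,\tilde v_n\}$ of $\mathbb{C}^n$ such that the function $\tilde\Psi(z):=\max_{1\le j\le n} m_j\log|z\cdot\overline{\tilde v_j}|$ satisfies $\tilde\Psi-\Psi\in L^\infty(\mathbb{D}^n)$.
   Context: $\mathbb{D}$ is the unit disk in $\mathbb{C}$. For $z,w\in\mathbb{C}^n$, $z\cdot\bar w=\sum_j z_j\bar w_j$ is the standard Hermitian product. *)

theory Defs
  imports "HOL-Analysis.Analysis"
begin

definition herm :: "complex ^ 'n \<Rightarrow> complex ^ 'n \<Rightarrow> complex" where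
  "herm z w = (\<Sum>i\<in>UNIV. z $ i * cnj (w $ i))"

definition logabs :: "complex \<Rightarrow> ereal" where
  "logabs x = (if x = 0 then - \<infinity> else ereal (ln (cmod x)))"

definition is_basis_C :: "('n::finite \<Rightarrow> complex ^ 'n) \<Rightarrow> bool" where
  "is_basis_C v \<longleftrightarrow>
     (\<forall>c::'n \<Rightarrow> complex. (\<Sum>j\<in>UNIV. c j *s v j) = 0 \<longrightarrow> (\<forall>j. c j = 0)) \<and>
     (\<forall>w::complex ^ 'n. \<exists>c::'n \<Rightarrow> complex. w = (\<Sum>j\<in>UNIV. c j *s v j))"

definition is_orthonormal_basis_C :: "('n::finite \<Rightarrow> complex ^ 'n) \<Rightarrow> bool" where
  "is_orthonormal_basis_C v \<longleftrightarrow> is_basis_C v \<and>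
     (\<forall>i j. herm (v i) (v j) = (if i = j then 1 else 0))"

definition polydisc :: "(complex ^ 'n) set" where
  "polydisc = {z. \<forall>i. cmod (z $ i) < 1}"

definition Psi :: "('n::finite \<Rightarrow> real) \<Rightarrow> ('n \<Rightarrow> complex ^ 'n) \<Rightarrow> complex ^ 'n \<Rightarrow> ereal" where
  "Psi m v z = Max (range (\<lambda>j. ereal (m j) * logabs (herm z (v j))))"

definition in_Linfty_polydisc :: "(complex ^ 'n \<Rightarrow> ereal) \<Rightarrow> bool" where
  "in_Linfty_polydisc f \<longleftrightarrow>
     f \<in> borel_measurable (lebesgue_on polydisc) \<and>
     (\<exists>C::real. AE z in lebesgue_on polydisc. \<bar>f z\<bar> \<le> ereal C)"

end

theory Submission
  imports Defs
begin

(* Order the basis by increasing weight and apply Gram-Schmidt. The resulting orthonormal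
   basis is adapted to the weights: each w_j is a combination of the v_i with m_i <= m_j, and
   vice versa. On the polydisc the functionals z . conj v_i are bounded, so a bounded quantity
   raised to the larger exponent m_j is controlled by its m_i-th power; hence
   max_j |z . conj w_j|^m_j and max_j |z . conj v_j|^m_j are comparable up to constants.
   Taking logarithms, the difference of the two Psi is bounded away from z = 0. *)

lemma herm_diff_left: "herm (a - b) c = herm a c - herm b c"
  unfolding herm_def by (simp add: sum_subtractf left_diff_distrib)

lemma herm_scale_left: "herm (k *s a) b = k * herm a b"
  unfolding herm_def by (simp add: sum_distrib_left mult.assoc)

lemma herm_sum_left: "herm (\<Sum>i\<in>A. f i) b = (\<Sum>i\<in>A. herm (f i) b)"
  unfolding herm_def by (simp add: sum_distrib_right sum.swap[of _ A])

lemma herm_commute: "herm a b = cnj (herm b a)"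
  unfolding herm_def by (simp add: mult.commute)

lemma herm_scale_right: "herm a (k *s b) = cnj k * herm a b"
  unfolding herm_def by (simp add: sum_distrib_left mult.left_commute)

lemma herm_sum_right: "herm a (\<Sum>i\<in>A. f i) = (\<Sum>i\<in>A. herm a (f i))"
  unfolding herm_def by (simp add: cnj_sum sum_distrib_left sum.swap[of _ A])

lemma herm_self: "herm a a = complex_of_real ((norm a)\<^sup>2)"
proof -
  have "(norm a)\<^sup>2 = (\<Sum>i\<in>UNIV. (cmod (a $ i))\<^sup>2)"
    unfolding norm_vec_def L2_set_def by (simp add: sum_nonneg)
  then show ?thesis
    unfolding herm_def by (simp add: complex_norm_square[symmetric])
qed

lemma herm_self_eq_0_iff: "herm a a = 0 \<longleftrightarrow> a = 0"
  by (simp add: herm_self)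

lemma herm_orthonormal_sum:
  assumes "finite A" "j \<in> A"
    and "\<And>i. i \<in> A \<Longrightarrow> herm (w i) (w j) = (if i = j then 1 else 0)"
  shows "herm (\<Sum>i\<in>A. c i *s w i) (w j) = c j"
proof -
  have "herm (\<Sum>i\<in>A. c i *s w i) (w j) = (\<Sum>i\<in>A. c i * (if i = j then 1 else 0))"
    unfolding herm_sum_left herm_scale_left using assms(3) by (intro sum.cong) auto
  then show ?thesis using assms(1,2) by (simp add: if_distrib cong: if_cong)
qed

lemma gram_schmidt_step:
  fixes w :: "'i \<Rightarrow> complex ^ 'm"
  assumes "finite A"
    and orth: "\<And>i j. i \<in> A \<Longrightarrow> j \<in> A \<Longrightarrow> herm (w i) (w j) = (if i = j then 1 else 0)"
    and x: "x \<notin> vec.span (w ` A)"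
  shows "\<exists>e. herm e e = 1 \<and> (\<forall>j\<in>A. herm e (w j) = 0 \<and> herm (w j) e = 0) \<and>
             vec.span (insert e (w ` A)) = vec.span (insert x (w ` A))"
proof -
  define s where "s = (\<Sum>i\<in>A. herm x (w i) *s w i)"
  define u where "u = x - s"
  define e where "e = (1 / complex_of_real (norm u)) *s u"
  have s_span: "s \<in> vec.span (w ` A)"
    unfolding s_def by (intro vec.span_sum vec.span_scale vec.span_base) auto
  then have "u \<noteq> 0" using x unfolding u_def by auto
  then have nu: "norm u > 0" by simp
  have "herm u (w j) = 0" if "j \<in> A" for j
    unfolding u_def s_def herm_diff_left using herm_orthonormal_sum[OF assms(1) that orth] that by simp
  then have e_orth: "\<forall>j\<in>A. herm e (w j) = 0 \<and> herm (w j) e = 0"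
    using herm_commute[of "w _" e] unfolding e_def herm_scale_left by auto
  have "herm e e = (1 / complex_of_real (norm u)) * cnj (1 / complex_of_real (norm u)) * herm u u"
    unfolding e_def herm_scale_left herm_scale_right by simp
  then have "herm e e = 1"
    unfolding herm_self using nu by (simp add: power2_eq_square)
  have "x = s + complex_of_real (norm u) *s e"
    unfolding e_def u_def using nu by simp
  moreover have "s \<in> vec.span (insert e (w ` A))"
    using s_span vec.span_mono[of "w ` A" "insert e (w ` A)"] by blast
  moreover have "e \<in> vec.span (insert e (w ` A))"
    by (simp add: vec.span_base)
  ultimately have "x \<in> vec.span (insert e (w ` A))"
    using vec.span_add vec.span_scale by metis
  moreover have "e \<in> vec.span (insert x (w ` A))"
    using s_span vec.span_mono[of "w ` A" "insert x (w ` A)"]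
    unfolding e_def u_def by (blast intro: vec.span_diff vec.span_scale vec.span_base)
  ultimately have "vec.span (insert e (w ` A)) = vec.span (insert x (w ` A))"
    unfolding vec.span_eq by (auto intro: vec.span_base)
  with \<open>herm e e = 1\<close> e_orth show ?thesis by blast
qed

lemma gram_schmidt_herm:
  fixes v :: "'i \<Rightarrow> complex ^ 'm"
  assumes "distinct L" "inj_on v (set L)" "vec.independent (v ` set L)"
  shows "\<exists>w. (\<forall>i\<in>set L. \<forall>j\<in>set L. herm (w i) (w j) = (if i = j then 1 else 0)) \<and>
             (\<forall>k\<le>length L. vec.span (w ` set (take k L)) = vec.span (v ` set (take k L)))"
  using assms
proof (induction L rule: rev_induct)
  case Nil
  then show ?case by simp
next
  case (snoc x L)
  have "x \<notin> set L" "distinct L" using snoc.prems(1) by auto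
  moreover have "inj_on v (set L)" using snoc.prems(2) by auto
  moreover have "vec.independent (v ` set L)"
    using snoc.prems(3) by (rule vec.independent_mono) auto
  ultimately obtain w
    where orth: "\<And>i j. i \<in> set L \<Longrightarrow> j \<in> set L \<Longrightarrow> herm (w i) (w j) = (if i = j then 1 else 0)"
      and spans: "\<And>k. k \<le> length L \<Longrightarrow>
                    vec.span (w ` set (take k L)) = vec.span (v ` set (take k L))"
    using snoc.IH by blast
  have span_L: "vec.span (w ` set L) = vec.span (v ` set L)"
    using spans[of "length L"] by simp
  have "v x \<notin> v ` set L"
    using snoc.prems(2) \<open>x \<notin> set L\<close> by (auto simp: inj_on_def)
  then have "v x \<notin> vec.span (w ` set L)"
    using snoc.prems(3) by (simp add: vec.independent_insert span_L)
  then obtain e where e: "herm e e = 1" "\<forall>j\<in>set L. herm e (w j) = 0 \<and> herm (w j) e = 0"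
    and span_e: "vec.span (insert e (w ` set L)) = vec.span (insert (v x) (w ` set L))"
    using gram_schmidt_step[of "set L" w "v x"] orth by blast
  define w' where "w' = w(x := e)"
  have "w' x = e" unfolding w'_def by simp
  have w'_L: "w' ` B = w ` B" if "B \<subseteq> set L" for B
    using that \<open>x \<notin> set L\<close> unfolding w'_def by (intro image_cong) auto
  have "\<forall>i\<in>set (L @ [x]). \<forall>j\<in>set (L @ [x]). herm (w' i) (w' j) = (if i = j then 1 else 0)"
    using orth e \<open>x \<notin> set L\<close> unfolding w'_def by auto
  moreover have "vec.span (w' ` set (take k (L @ [x]))) = vec.span (v ` set (take k (L @ [x])))"
    if "k \<le> length (L @ [x])" for k
  proof (cases "k \<le> length L")
    case True
    then show ?thesis using spans[OF True] w'_L[of "set (take k L)"] by (simp add: set_take_subset)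
  next
    case False
    then have "set (take k (L @ [x])) = insert x (set L)" using that by simp
    moreover have "w' ` insert x (set L) = insert e (w ` set L)"
      using w'_L[of "set L"] \<open>w' x = e\<close> by simp
    ultimately show ?thesis
      using span_e by (simp add: vec.span_insert span_L)
  qed
  ultimately show ?case by blast
qed

lemma vec_span_image_sum:
  assumes "x \<in> vec.span (u ` S)" "finite S" "inj_on u S"
  shows "\<exists>c. x = (\<Sum>i\<in>S. c i *s u i)"
proof -
  obtain a where "x = (\<Sum>y\<in>u ` S. a y *s y)"
    using vec.span_finite[of "u ` S"] assms(1,2) by auto
  also have "\<dots> = (\<Sum>i\<in>S. a (u i) *s u i)"
    using assms(3) by (simp add: sum.reindex)
  finally show ?thesis by (intro exI[of _ "\<lambda>i. a (u i)"])
qed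

lemma is_basis_C_inj: "is_basis_C v \<Longrightarrow> inj v"
proof (rule injI, rule ccontr)
  fix i j assume basis: "is_basis_C v" and "v i = v j" "i \<noteq> j"
  define c where "c k = (if k = i then 1 else if k = j then -1 else (0::complex))" for k
  have "(\<Sum>k\<in>UNIV. c k *s v k) = (\<Sum>k\<in>{i, j}. c k *s v k)"
    by (rule sum.mono_neutral_right) (auto simp: c_def)
  also have "\<dots> = 0" using \<open>v i = v j\<close> \<open>i \<noteq> j\<close> by (simp add: c_def)
  finally have "c i = 0" using basis unfolding is_basis_C_def by blast
  then show False by (simp add: c_def)
qed

lemma is_basis_C_independent:
  assumes "is_basis_C v" shows "vec.independent (range v)"
proof (rule vec.independent_if_scalars_zero)
  fix f y assume sum0: "(\<Sum>x\<in>range v. f x *s x) = 0" and "y \<in> range v"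
  then obtain j where j: "y = v j" by blast
  have "(\<Sum>i\<in>UNIV. f (v i) *s v i) = 0"
    using sum0 is_basis_C_inj[OF assms] by (simp add: sum.reindex)
  then show "f y = 0"
    using assms j unfolding is_basis_C_def by (auto dest!: spec[of _ "\<lambda>i. f (v i)"])
qed simp

lemma is_basis_C_span:
  assumes "is_basis_C v" shows "vec.span (range v) = UNIV"
proof -
  have "x \<in> vec.span (range v)" for x
  proof -
    obtain c where "x = (\<Sum>j\<in>UNIV. c j *s v j)"
      using assms unfolding is_basis_C_def by blast
    then show ?thesis by (simp add: vec.span_sum vec.span_scale vec.span_base)
  qed
  then show ?thesis by blast
qed

lemma is_orthonormal_basis_CI:
  assumes orth: "\<And>i j. herm (w i) (w j) = (if i = j then 1 else 0)"
    and span: "vec.span (range w) = UNIV"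
  shows "is_orthonormal_basis_C w"
proof -
  have "inj w"
    using orth by (metis injI one_neq_zero)
  have "c j = 0" if "(\<Sum>i\<in>UNIV. c i *s w i) = 0" for c and j :: 'a
  proof -
    have "herm (\<Sum>i\<in>UNIV. c i *s w i) (w j) = c j"
      by (rule herm_orthonormal_sum) (use orth in auto)
    then show ?thesis using that by (simp add: herm_def)
  qed
  moreover have "\<exists>c. x = (\<Sum>i\<in>UNIV. c i *s w i)" for x
    using vec_span_image_sum[of x w UNIV] span \<open>inj w\<close> by simp
  ultimately show ?thesis
    unfolding is_orthonormal_basis_C_def is_basis_C_def using orth by blast
qed

lemma sorted_flag_span_mem:
  assumes "sorted (map m L)" "j \<in> set L"
    and "\<And>k. k \<le> length L \<Longrightarrow> vec.span (u ` set (take k L)) = vec.span (v ` set (take k L))"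
  shows "u j \<in> vec.span (v ` {i. m i \<le> m j})"
proof -
  obtain k where k: "k < length L" "L ! k = j"
    using assms(2) by (auto simp: in_set_conv_nth)
  have "set (take (Suc k) L) \<subseteq> {i. m i \<le> m j}"
  proof
    fix y assume "y \<in> set (take (Suc k) L)"
    then obtain p where "p < Suc k" "y = L ! p"
      by (auto simp: in_set_conv_nth)
    then show "y \<in> {i. m i \<le> m j}"
      using sorted_nth_mono[OF assms(1), of p k] k by (simp add: less_Suc_eq_le)
  qed
  moreover have "u j \<in> vec.span (u ` set (take (Suc k) L))"
    using k by (intro vec.span_base) (auto simp: take_Suc_conv_app_nth)
  ultimately show ?thesis
    using assms(3)[of "Suc k"] k(1) vec.span_mono[OF image_mono] by fastforce
qed

lemma orthonormal_basis_adapted_to_weights: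
  fixes v :: "'n::finite \<Rightarrow> complex ^ 'n" and m :: "'n \<Rightarrow> real"
  assumes "is_basis_C v"
  shows "\<exists>w. is_orthonormal_basis_C w \<and>
           (\<forall>j. w j \<in> vec.span (v ` {i. m i \<le> m j})) \<and>
           (\<forall>j. v j \<in> vec.span (w ` {i. m i \<le> m j}))"
proof -
  obtain L0 :: "'n list" where "set L0 = UNIV" "distinct L0"
    using finite_distinct_list[OF finite_class.finite_UNIV] by blast
  define L where "L = sort_key m L0"
  have L: "set L = UNIV" "distinct L" "sorted (map m L)"
    unfolding L_def using \<open>set L0 = UNIV\<close> \<open>distinct L0\<close> by auto
  obtain w where orth: "\<forall>i\<in>set L. \<forall>j\<in>set L. herm (w i) (w j) = (if i = j then 1 else 0)"
    and flag: "\<forall>k\<le>length L. vec.span (w ` set (take k L)) = vec.span (v ` set (take k L))"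
    using gram_schmidt_herm[of L v] L(2) is_basis_C_inj[OF assms]
      is_basis_C_independent[OF assms] by (auto simp: L(1) inj_on_def)
  have "vec.span (range w) = UNIV"
    using flag is_basis_C_span[OF assms] L(1) by (metis order_refl take_all)
  then have "is_orthonormal_basis_C w"
    using orth L(1) by (intro is_orthonormal_basis_CI) auto
  moreover have "w j \<in> vec.span (v ` {i. m i \<le> m j})" for j
    using flag L by (intro sorted_flag_span_mem) auto
  moreover have "v j \<in> vec.span (w ` {i. m i \<le> m j})" for j
    using flag L by (intro sorted_flag_span_mem) auto
  ultimately show ?thesis by blast
qed

lemma powr_le_bound_powr_mult:
  fixes x B a b :: real
  assumes "0 \<le> x" "x \<le> B" "1 \<le> B" "0 \<le> a" "a \<le> b"
  shows "x powr b \<le> B powr b * x powr a"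
proof -
  have "x powr (b - a) \<le> B powr (b - a)"
    using assms by (intro powr_mono2) auto
  also have "\<dots> \<le> B powr b"
    using assms by (intro powr_mono) auto
  finally have "x powr a * x powr (b - a) \<le> x powr a * B powr b"
    by (simp add: mult_left_mono)
  then show ?thesis by (simp add: mult.commute flip: powr_add)
qed

lemma norm_sum_powr_le_Max_powr:
  fixes c f :: "'i \<Rightarrow> complex" and m :: "'i \<Rightarrow> real"
  assumes S: "finite S" "S \<noteq> {}"
    and m: "\<And>i. i \<in> S \<Longrightarrow> 0 \<le> m i \<and> m i \<le> a"
    and B: "\<And>i. i \<in> S \<Longrightarrow> cmod (f i) \<le> B" "1 \<le> B"
  shows "cmod (\<Sum>i\<in>S. c i * f i) powr a
           \<le> ((\<Sum>i\<in>S. cmod (c i)) * B) powr a * (MAX i\<in>S. cmod (f i) powr m i)"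
proof -
  have "(MAX i\<in>S. cmod (f i)) \<in> (\<lambda>i. cmod (f i)) ` S"
    using S by (intro Max_in) auto
  then obtain i0 where "i0 \<in> S" "cmod (f i0) = (MAX i\<in>S. cmod (f i))"
    by (metis imageE)
  then have i0: "i0 \<in> S" "\<And>i. i \<in> S \<Longrightarrow> cmod (f i) \<le> cmod (f i0)"
    using S(1) by auto
  have "0 \<le> a" using m i0(1) by force
  define A where "A = (\<Sum>i\<in>S. cmod (c i))"
  have "A \<ge> 0" unfolding A_def by (simp add: sum_nonneg)
  have "cmod (\<Sum>i\<in>S. c i * f i) \<le> (\<Sum>i\<in>S. cmod (c i) * cmod (f i))"
    by (rule order_trans[OF norm_sum]) (simp add: norm_mult)
  also have "\<dots> \<le> (\<Sum>i\<in>S. cmod (c i) * cmod (f i0))"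
    using i0(2) by (intro sum_mono mult_left_mono) auto
  also have "\<dots> = A * cmod (f i0)" unfolding A_def by (simp add: sum_distrib_right)
  finally have "cmod (\<Sum>i\<in>S. c i * f i) powr a \<le> (A * cmod (f i0)) powr a"
    using \<open>0 \<le> a\<close> by (intro powr_mono2) auto
  also have "\<dots> = A powr a * cmod (f i0) powr a"
    using \<open>A \<ge> 0\<close> by (simp add: powr_mult)
  also have "\<dots> \<le> A powr a * (B powr a * cmod (f i0) powr m i0)"
    using B m i0(1) by (intro mult_left_mono powr_le_bound_powr_mult) auto
  also have "\<dots> = (A * B) powr a * cmod (f i0) powr m i0"
    using \<open>A \<ge> 0\<close> B(2) by (simp add: powr_mult)
  also have "\<dots> \<le> (A * B) powr a * (MAX i\<in>S. cmod (f i) powr m i)"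
    using S i0(1) by (intro mult_left_mono Max_ge) auto
  finally show ?thesis unfolding A_def .
qed

definition exp_Psi :: "('i::finite \<Rightarrow> real) \<Rightarrow> ('i \<Rightarrow> complex ^ 'n) \<Rightarrow> complex ^ 'n \<Rightarrow> real" where
  "exp_Psi m u z = Max (range (\<lambda>j. cmod (herm z (u j)) powr m j))"

lemma exp_Psi_ge: "cmod (herm z (u j)) powr m j \<le> exp_Psi m u z"
  unfolding exp_Psi_def by (rule Max_ge) auto

lemma exp_Psi_nonneg: "0 \<le> exp_Psi m u z"
  using exp_Psi_ge[of z u] powr_ge_zero order_trans by blast

lemma herm_polydisc_bound:
  assumes "z \<in> polydisc" shows "cmod (herm z a) \<le> (\<Sum>k\<in>UNIV. cmod (a $ k))"
proof -
  have "cmod (herm z a) \<le> (\<Sum>k\<in>UNIV. cmod (z $ k) * cmod (a $ k))"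
    unfolding herm_def by (rule order_trans[OF norm_sum]) (simp add: norm_mult)
  also have "\<dots> \<le> (\<Sum>k\<in>UNIV. cmod (a $ k))"
    using assms unfolding polydisc_def
    by (intro sum_mono mult_left_le_one_le) (auto simp: less_imp_le)
  finally show ?thesis .
qed

lemma herm_polydisc_bounded:
  fixes v :: "'i::finite \<Rightarrow> complex ^ 'n"
  shows "\<exists>B\<ge>1. \<forall>z\<in>polydisc. \<forall>i. cmod (herm z (v i)) \<le> B"
proof (intro exI conjI ballI allI)
  define B where "B = 1 + (\<Sum>i\<in>UNIV. \<Sum>k\<in>UNIV. cmod (v i $ k))"
  have "0 \<le> (\<Sum>i\<in>UNIV. \<Sum>k\<in>UNIV. cmod (v i $ k))"
    by (intro sum_nonneg) auto
  then show "1 \<le> B" unfolding B_def by simp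
  fix z :: "complex ^ 'n" and i assume "z \<in> polydisc"
  have "(\<Sum>k\<in>UNIV. cmod (v i $ k)) \<le> (\<Sum>i\<in>UNIV. \<Sum>k\<in>UNIV. cmod (v i $ k))"
    by (intro member_le_sum sum_nonneg) auto
  then show "cmod (herm z (v i)) \<le> B"
    using herm_polydisc_bound[OF \<open>z \<in> polydisc\<close>, of "v i"] unfolding B_def by linarith
qed

lemma exp_Psi_le_of_span:
  fixes u v :: "'i::finite \<Rightarrow> complex ^ 'n"
  assumes m: "\<And>j. 0 \<le> m j" and "inj v"
    and span: "\<And>j. u j \<in> vec.span (v ` {i. m i \<le> m j})"
  shows "\<exists>C>0. \<forall>z\<in>polydisc. exp_Psi m u z \<le> C * exp_Psi m v z"
proof -
  define S where "S j = {i. m i \<le> m j}" for j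
  have "\<exists>c. u j = (\<Sum>i\<in>S j. c i *s v i)" for j
    unfolding S_def by (rule vec_span_image_sum[OF span]) (auto intro: inj_on_subset[OF \<open>inj v\<close>])
  then obtain c where c: "\<And>j. u j = (\<Sum>i\<in>S j. c j i *s v i)" by metis
  obtain B where B: "1 \<le> B" "\<And>z i. z \<in> polydisc \<Longrightarrow> cmod (herm z (v i)) \<le> B"
    using herm_polydisc_bounded[of v] by blast
  define K where "K j = ((\<Sum>i\<in>S j. cmod (c j i)) * B) powr m j" for j
  define C where "C = 1 + (\<Sum>j\<in>UNIV. K j)"
  have "K j \<le> C" for j
    unfolding C_def using member_le_sum[of j UNIV K] by (simp add: K_def)
  have "exp_Psi m u z \<le> C * exp_Psi m v z" if z: "z \<in> polydisc" for z
    unfolding exp_Psi_def[of m u]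
  proof (rule Max.boundedI)
    fix y assume "y \<in> range (\<lambda>j. cmod (herm z (u j)) powr m j)"
    then obtain j where y: "y = cmod (herm z (u j)) powr m j" by blast
    have "herm z (u j) = (\<Sum>i\<in>S j. cnj (c j i) * herm z (v i))"
      unfolding c herm_sum_right herm_scale_right ..
    then have "y \<le> ((\<Sum>i\<in>S j. cmod (cnj (c j i))) * B) powr m j
                   * (MAX i\<in>S j. cmod (herm z (v i)) powr m i)"
      unfolding y \<open>herm z (u j) = _\<close> by (intro norm_sum_powr_le_Max_powr) (use B z m in \<open>auto simp: S_def\<close>)
    then have "y \<le> K j * (MAX i\<in>S j. cmod (herm z (v i)) powr m i)"
      by (simp add: K_def)
    also have "\<dots> \<le> K j * exp_Psi m v z"
      unfolding exp_Psi_def by (intro mult_left_mono Max_mono) (auto simp: K_def S_def)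
    also have "\<dots> \<le> C * exp_Psi m v z"
      using \<open>K j \<le> C\<close> exp_Psi_nonneg by (rule mult_right_mono)
    finally show "y \<le> C * exp_Psi m v z" .
  qed auto
  moreover have "C > 0" unfolding C_def K_def by (simp add: add_pos_nonneg sum_nonneg)
  ultimately show ?thesis by blast
qed

definition ln_ereal :: "real \<Rightarrow> ereal" where
  "ln_ereal t = (if t \<le> 0 then - \<infinity> else ereal (ln t))"

lemma Psi_eq_ln_exp_Psi:
  assumes "\<And>j. 0 < m j"
  shows "Psi m u z = ln_ereal (exp_Psi m u z)"
proof -
  have "ereal (m j) * logabs x = ln_ereal (cmod x powr m j)" for j x
    using assms[of j] unfolding ln_ereal_def logabs_def by auto
  then have "Psi m u z = Max (ln_ereal ` range (\<lambda>j. cmod (herm z (u j)) powr m j))"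
    unfolding Psi_def by (simp add: image_image)
  also have "\<dots> = ln_ereal (exp_Psi m u z)"
    unfolding exp_Psi_def by (rule mono_Max_commute[symmetric]) (auto simp: mono_def ln_ereal_def)
  finally show ?thesis .
qed

lemma exp_Psi_pos:
  assumes "is_basis_C v" "z \<noteq> 0"
  shows "0 < exp_Psi m v z"
proof -
  obtain c where "z = (\<Sum>j\<in>UNIV. c j *s v j)"
    using assms(1) unfolding is_basis_C_def by blast
  then have "herm z z = (\<Sum>j\<in>UNIV. cnj (c j) * herm z (v j))"
    by (simp add: herm_sum_right herm_scale_right)
  then obtain j where "herm z (v j) \<noteq> 0"
    using assms(2) herm_self_eq_0_iff by (metis (no_types, lifting) mult_zero_right sum.neutral)
  then have "0 < cmod (herm z (v j)) powr m j" by simp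
  also have "\<dots> \<le> exp_Psi m v z" by (rule exp_Psi_ge)
  finally show ?thesis .
qed

lemma abs_ln_diff_le:
  fixes a b C D :: real
  assumes "0 < a" "0 < b" "a \<le> C * b" "b \<le> D * a"
  shows "\<bar>ln a - ln b\<bar> \<le> \<bar>ln C\<bar> + \<bar>ln D\<bar>"
proof -
  have "0 < C * b" "0 < D * a"
    using assms by linarith+
  then have "0 < C" "0 < D"
    using assms(1,2) by (simp_all add: zero_less_mult_iff)
  have "ln a \<le> ln (C * b)" "ln b \<le> ln (D * a)"
    using assms \<open>0 < C * b\<close> \<open>0 < D * a\<close> by simp_all
  then have "ln a \<le> ln C + ln b" "ln b \<le> ln D + ln a"
    using \<open>0 < C\<close> \<open>0 < D\<close> assms(1,2) by (simp_all add: ln_mult)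
  then show ?thesis by linarith
qed

lemma polydisc_sets_lebesgue: "polydisc \<in> sets lebesgue"
proof -
  have "polydisc = (\<Inter>i. {z :: complex ^ 'n. cmod (z $ i) < 1})"
    unfolding polydisc_def by auto
  also have "open \<dots>"
    by (intro open_INT finite_class.finite_UNIV ballI open_Collect_less continuous_intros)
  finally show ?thesis by (metis borel_open sets_completionI_sets sets_lborel)
qed

lemma Psi_measurable:
  assumes "\<And>j. 0 < m j"
  shows "Psi m u \<in> borel_measurable (lebesgue_on polydisc)"
proof -
  have "(\<lambda>z. herm z a) \<in> borel_measurable (lebesgue_on polydisc)" for a :: "complex ^ 'n"
    by (intro continuous_imp_measurable_on_sets_lebesgue polydisc_sets_lebesgue)
       (unfold herm_def, intro continuous_intros)
  then have "(\<lambda>z. cmod (herm z (u j)) powr m j) \<in> borel_measurable (lebesgue_on polydisc)" for j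
    by measurable
  then have "exp_Psi m u \<in> borel_measurable (lebesgue_on polydisc)"
    unfolding exp_Psi_def by (intro borel_measurable_Max) auto
  moreover have "ln_ereal \<in> borel_measurable borel"
    unfolding ln_ereal_def by measurable
  ultimately show ?thesis
    unfolding Psi_eq_ln_exp_Psi[OF assms, abs_def] by measurable
qed

lemma in_Linfty_polydiscI:
  assumes "f \<in> borel_measurable (lebesgue_on polydisc)"
    and "\<And>z. z \<in> polydisc \<Longrightarrow> z \<noteq> 0 \<Longrightarrow> \<bar>f z\<bar> \<le> ereal C"
  shows "in_Linfty_polydisc f"
proof -
  have "AE z in lebesgue. z \<noteq> (0 :: complex ^ 'n)"
    using AE_not_in[of "{0}" lebesgue] by simp
  then have "AE z in lebesgue. z \<in> polydisc \<longrightarrow> \<bar>f z\<bar> \<le> ereal C"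
    by eventually_elim (use assms(2) in auto)
  then have "AE z in lebesgue_on polydisc. \<bar>f z\<bar> \<le> ereal C"
    using polydisc_sets_lebesgue by (subst AE_restrict_space_iff) auto
  then show ?thesis
    unfolding in_Linfty_polydisc_def using assms(1) by blast
qed

theorem lemma2p4:
  fixes v :: "'n::finite \<Rightarrow> complex ^ 'n" and m :: "'n \<Rightarrow> real"
  assumes "is_basis_C v"
    and "\<And>j. m j > 0"
  shows "\<exists>w :: 'n \<Rightarrow> complex ^ 'n. is_orthonormal_basis_C w \<and>
           in_Linfty_polydisc (\<lambda>z. Psi m w z - Psi m v z)"
proof -
  obtain w where w: "is_orthonormal_basis_C w"
    and wv: "\<And>j. w j \<in> vec.span (v ` {i. m i \<le> m j})"
    and vw: "\<And>j. v j \<in> vec.span (w ` {i. m i \<le> m j})"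
    using orthonormal_basis_adapted_to_weights[OF assms(1)] by blast
  have "is_basis_C w" using w unfolding is_orthonormal_basis_C_def by blast
  have m: "\<And>j. 0 \<le> m j" using assms(2) by (simp add: less_imp_le)
  obtain C where C: "\<forall>z\<in>polydisc. exp_Psi m w z \<le> C * exp_Psi m v z"
    using exp_Psi_le_of_span[OF m is_basis_C_inj[OF assms(1)] wv] by blast
  obtain D where D: "\<forall>z\<in>polydisc. exp_Psi m v z \<le> D * exp_Psi m w z"
    using exp_Psi_le_of_span[OF m is_basis_C_inj[OF \<open>is_basis_C w\<close>] vw] by blast
  have "\<bar>Psi m w z - Psi m v z\<bar> \<le> ereal (\<bar>ln C\<bar> + \<bar>ln D\<bar>)" if "z \<in> polydisc" "z \<noteq> 0" for z
  proof -
    have "0 < exp_Psi m w z" "0 < exp_Psi m v z"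
      using exp_Psi_pos \<open>is_basis_C w\<close> assms(1) \<open>z \<noteq> 0\<close> by blast+
    then show ?thesis
      using abs_ln_diff_le[of "exp_Psi m w z" "exp_Psi m v z" C D] C D \<open>z \<in> polydisc\<close>
      unfolding Psi_eq_ln_exp_Psi[OF assms(2)] ln_ereal_def by simp
  qed
  moreover have "(\<lambda>z. Psi m w z - Psi m v z) \<in> borel_measurable (lebesgue_on polydisc)"
    using Psi_measurable[OF assms(2)] by (intro borel_measurable_ereal_diff)
  ultimately show ?thesis
    using w in_Linfty_polydiscI by blast
qed

end
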